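(* $D(18,\{3,4\})\le 33$; equivalently, there exists a $\{K_3,K_4\}$-decomposition of $K_{18}$ with $\alpha\le 15$ (indeed one with $15$ copies of $K_3$ and $18$ copies of $K_4$).
   Context: A $\{K_3,K_4\}$-decomposition of $K_v$ is a collection of subgraphs, each isomorphic to $K_3$ or $K_4$, such that every edge of $K_v$ lies in exactly one of them. In such a decomposition $\alpha$ and $\beta$ denote the numbers of copies of $K_3$ and $K_4$; since $3\alpha+6\beta=\binom{v}{2}$, minimizing $\alpha+\beta$ is equivalent to minimizing $\alpha$. $D(v,\{3,4\})$ is the minimum of $\alpha+\beta$ over all such decompositions of $K_v$. *)

theory Defs
  imports Main
begin

text \<open>K_v has vertex set {0..<v}. A copy of K_3 or K_4 in K_v is determined by its
vertex set (a 3- or 4-subset).\<close>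

definition K34_decomposition :: "nat \<Rightarrow> nat set set \<Rightarrow> bool" where
  "K34_decomposition v B \<longleftrightarrow>
     finite B \<and>
     (\<forall>b\<in>B. b \<subseteq> {0..<v} \<and> (card b = 3 \<or> card b = 4)) \<and>
     (\<forall>x y. x < v \<longrightarrow> y < v \<longrightarrow> x \<noteq> y \<longrightarrow> (\<exists>!b. b \<in> B \<and> x \<in> b \<and> y \<in> b))"

definition num_K3 :: "nat set set \<Rightarrow> nat" where
  "num_K3 B = card {b \<in> B. card b = 3}"

definition num_K4 :: "nat set set \<Rightarrow> nat" where
  "num_K4 B = card {b \<in> B. card b = 4}"

definition D34 :: "nat \<Rightarrow> nat" where
  "D34 v = (LEAST n. \<exists>B. K34_decomposition v B \<and> num_K3 B + num_K4 B = n)"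

end

theory Submission
  imports Defs
begin

text \<open>The bound is witnessed by an explicit design on 18 points with 15 triples and 18 quadruples
(\<open>3 \<cdot> 15 + 6 \<cdot> 18 = 153 = (18 choose 2)\<close> edges). Listed without repetition, its
defining properties become finite list computations that the simplifier evaluates.\<close>

lemma K34_decomposition_setI:
  assumes "distinct bs"
    and "list_all (\<lambda>b. b \<subseteq> {0..<v} \<and> (card b = 3 \<or> card b = 4)) bs"
    and "list_all (\<lambda>x. list_all (\<lambda>y. x \<noteq> y \<longrightarrow>
           length (filter (\<lambda>b. x \<in> b \<and> y \<in> b) bs) = 1) [0..<v]) [0..<v]"
  shows "K34_decomposition v (set bs)"
proof -
  have "\<exists>!b. b \<in> set bs \<and> x \<in> b \<and> y \<in> b"
    if "x < v" "y < v" "x \<noteq> y" for x y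
  proof -
    have "length (filter (\<lambda>b. x \<in> b \<and> y \<in> b) bs) = 1"
      using assms(3) that by (simp add: list_all_iff)
    then have "card ({b. x \<in> b \<and> y \<in> b} \<inter> set bs) = 1"
      by (simp only: distinct_length_filter[OF assms(1)])
    then obtain a where "{b. x \<in> b \<and> y \<in> b} \<inter> set bs = {a}"
      by (auto simp: card_1_singleton_iff)
    then have "b \<in> set bs \<and> x \<in> b \<and> y \<in> b \<longleftrightarrow> b = a" for b
      by blast
    then show ?thesis by auto
  qed
  moreover have "\<forall>b\<in>set bs. b \<subseteq> {0..<v} \<and> (card b = 3 \<or> card b = 4)"
    using assms(2) by (simp add: list_all_iff)
  ultimately show ?thesis
    unfolding K34_decomposition_def by blast
qed

lemma num_K3_set: "distinct bs \<Longrightarrow> num_K3 (set bs) = length (filter (\<lambda>b. card b = 3) bs)"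
  unfolding num_K3_def by (simp add: distinct_length_filter Collect_conj_eq Int_commute)

lemma num_K4_set: "distinct bs \<Longrightarrow> num_K4 (set bs) = length (filter (\<lambda>b. card b = 4) bs)"
  unfolding num_K4_def by (simp add: distinct_length_filter Collect_conj_eq Int_commute)

lemma D34_le: "K34_decomposition v B \<Longrightarrow> D34 v \<le> num_K3 B + num_K4 B"
  unfolding D34_def by (rule Least_le) blast

definition K18_blocks :: "nat set list" where
  "K18_blocks =
    [{1,2,5,15}, {0,1,4,17}, {0,2,3,16}, {0,5,9}, {2,4,11}, {1,3,10}, {3,5,11,12},
     {4,5,10,14}, {3,4,9,13}, {5,8,16,17}, {3,6,15,17}, {4,7,15,16}, {4,6,8,12},
     {5,6,7,13}, {3,7,8,14}, {1,7,9}, {2,8,10}, {0,6,11}, {2,6,9}, {1,8,11}, {0,7,10},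
     {6,10,16}, {7,11,17}, {8,9,15}, {2,7,12}, {0,8,13}, {1,6,14}, {1,12,13,16},
     {2,13,14,17}, {0,12,14,15}, {9,11,14,16}, {10,11,13,15}, {9,10,12,17}]"

lemma distinct_K18_blocks: "distinct K18_blocks"
  unfolding K18_blocks_def by code_simp

lemma K34_decomposition_K18_blocks: "K34_decomposition 18 (set K18_blocks)"
  by (rule K34_decomposition_setI[OF distinct_K18_blocks]; unfold K18_blocks_def; code_simp)

lemma num_K3_K18_blocks: "num_K3 (set K18_blocks) = 15"
  unfolding num_K3_set[OF distinct_K18_blocks] K18_blocks_def by code_simp

lemma num_K4_K18_blocks: "num_K4 (set K18_blocks) = 18"
  unfolding num_K4_set[OF distinct_K18_blocks] K18_blocks_def by code_simp

theorem mainTheorem3: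
  shows "D34 18 \<le> 33 \<and>
    (\<exists>B. K34_decomposition 18 B \<and> num_K3 B = 15 \<and> num_K4 B = 18)"
  using D34_le[OF K34_decomposition_K18_blocks] K34_decomposition_K18_blocks
    num_K3_K18_blocks num_K4_K18_blocks
  by auto

end
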